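(* Let $T\ge 3$ and consider the dynamic panel logit AR(1) model: binary outcomes $Y_0,Y_1,\dots,Y_T\in\{0,1\}$, regressors $X=(X_1,\dots,X_T)\in\mathbb{R}^{K\times T}$, fixed effect $A\in\mathbb{R}$, with, for $t\in\{1,\dots,T\}$, $$\Pr(Y_t=1\mid Y_0,\dots,Y_{t-1},X,A)=\frac{\exp(X_t'\beta_0+Y_{t-1}\gamma_0+A)}{1+\exp(X_t'\beta_0+Y_{t-1}\gamma_0+A)}.$$ For $y_0\in\{0,1\}$, $y=(y_1,\dots,y_T)\in\{0,1\}^T$, $x\in\mathbb{R}^{K\times T}$, $\beta\in\mathbb{R}^K$, $\gamma\in\mathbb{R}$ let $z_t=x_t'\beta+y_{t-1}\gamma$ and $z_{ts}=z_t-z_s$. For $t<s<r$ in $\{1,\dots,T\}$ define $$m^{(a)(t,s,r)}_{y_0}(y,x,\beta,\gamma)=\begin{cases}\exp(z_{ts})&(y_t,y_s,y_r)=(0,1,0),\\ \exp(z_{tr})&(y_t,y_s,y_r)=(0,1,1),\\ -1&(y_t,y_s)=(1,0),\\ \exp(z_{rs})-1&(y_t,y_s,y_r)=(1,1,0),\\0&\text{otherwise},\end{cases}$$ $$m^{(b)(t,s,r)}_{y_0}(y,x,\beta,\gamma)=\begin{cases}\exp(z_{sr})-1&(y_t,y_s,y_r)=(0,0,1),\\ -1&(y_t,y_s)=(0,1),\\ \exp(z_{rt})&(y_t,y_s,y_r)=(1,0,0),\\ \exp(z_{st})&(y_t,y_s,y_r)=(1,0,1),\\0&\text{otherwise}.\end{cases}$$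 Then for all $t<s<r$ in $\{1,\dots,T\}$, all $y_0\in\{0,1\}$, $x\in\mathbb{R}^{K\times T}$, $\alpha\in\mathbb{R}$ and all functions $w:\{0,1\}^{t-1}\to\mathbb{R}$, $$\mathbb{E}\big[w(Y_1,\dots,Y_{t-1})\,m^{(a)(t,s,r)}_{y_0}(Y,X,\beta_0,\gamma_0)\mid Y_0=y_0,X=x,A=\alpha\big]=0,$$ $$\mathbb{E}\big[w(Y_1,\dots,Y_{t-1})\,m^{(b)(t,s,r)}_{y_0}(Y,X,\beta_0,\gamma_0)\mid Y_0=y_0,X=x,A=\alpha\big]=0,$$ where $Y=(Y_1,\dots,Y_T)$.
   Context: The joint distribution of $(Y_0,X,A)$ is unrestricted; only the conditional law of $(Y_1,\dots,Y_T)$ given $(Y_0,X,A)$ is specified by the logit model. Note $z_t$ depends on $y_{t-1}$ (with $y_0$ the initial condition). For $t=1$, $w$ is a constant. *)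

theory Defs
  imports Complex_Main "HOL-Library.FuncSet"
begin

text \<open>Outcome histories y = (y_1,...,y_T) are extensional functions in
  PiE {1..T} (\<lambda>_. {0,1}); y_0 is passed separately. Regressors x t k
  (t = 1..T, k < K), coefficient beta k.\<close>

definition lagy :: "nat \<Rightarrow> (nat \<Rightarrow> nat) \<Rightarrow> nat \<Rightarrow> nat" where
  "lagy y0 y t = (if t = 1 then y0 else y (t - 1))"

definition zidx :: "nat \<Rightarrow> nat \<Rightarrow> (nat \<Rightarrow> nat) \<Rightarrow> (nat \<Rightarrow> nat \<Rightarrow> real)
    \<Rightarrow> (nat \<Rightarrow> real) \<Rightarrow> real \<Rightarrow> nat \<Rightarrow> real" where
  "zidx K y0 y x beta gamma t = (\<Sum>k<K. x t k * beta k) + real (lagy y0 y t) * gamma"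

definition logistic :: "real \<Rightarrow> real" where
  "logistic u = exp u / (1 + exp u)"

definition cprob :: "nat \<Rightarrow> nat \<Rightarrow> nat \<Rightarrow> (nat \<Rightarrow> nat \<Rightarrow> real) \<Rightarrow> (nat \<Rightarrow> real)
    \<Rightarrow> real \<Rightarrow> real \<Rightarrow> (nat \<Rightarrow> nat) \<Rightarrow> real" where
  "cprob K T y0 x beta0 gamma0 alpha y =
     (\<Prod>t\<in>{1..T}. let p = logistic (zidx K y0 y x beta0 gamma0 t + alpha)
                   in if y t = 1 then p else 1 - p)"

definition m_a :: "nat \<Rightarrow> nat \<Rightarrow> nat \<Rightarrow> nat \<Rightarrow> nat \<Rightarrow> (nat \<Rightarrow> nat)
    \<Rightarrow> (nat \<Rightarrow> nat \<Rightarrow> real) \<Rightarrow> (nat \<Rightarrow> real) \<Rightarrow> real \<Rightarrow> real" where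
  "m_a K t s r y0 y x beta gamma =
     (let z = zidx K y0 y x beta gamma in
      if (y t, y s, y r) = (0, 1, 0) then exp (z t - z s)
      else if (y t, y s, y r) = (0, 1, 1) then exp (z t - z r)
      else if (y t, y s) = (1, 0) then -1
      else if (y t, y s, y r) = (1, 1, 0) then exp (z r - z s) - 1
      else 0)"

definition m_b :: "nat \<Rightarrow> nat \<Rightarrow> nat \<Rightarrow> nat \<Rightarrow> nat \<Rightarrow> (nat \<Rightarrow> nat)
    \<Rightarrow> (nat \<Rightarrow> nat \<Rightarrow> real) \<Rightarrow> (nat \<Rightarrow> real) \<Rightarrow> real \<Rightarrow> real" where
  "m_b K t s r y0 y x beta gamma =
     (let z = zidx K y0 y x beta gamma in
      if (y t, y s, y r) = (0, 0, 1) then exp (z s - z r) - 1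
      else if (y t, y s) = (0, 1) then -1
      else if (y t, y s, y r) = (1, 0, 0) then exp (z r - z t)
      else if (y t, y s, y r) = (1, 0, 1) then exp (z s - z t)
      else 0)"

end

(* Conditional expectations along a binary chain are iterated one-period averages, integrating
   out Y_T, ..., Y_1 in turn.  Periods after r do not enter m and w only sees the history before
   t, so it suffices that E[m | Y_1, ..., Y_(t-1)] = 0.  Integrating out Y_r turns m into
   A * Pr(Y_r = 0 | Y_(r-1)) + B, where A and B are functions of Y_t, Y_s, z_t, z_s and A
   vanishes unless Y_s = c (c = 1 for m_a, c = 0 for m_b).  On {Y_s = c} the expectation G of
   Pr(Y_r = 0 | Y_(r-1)) over the periods between s and r is a constant, so the expectation
   over periods t, ..., s is G * E[A] + E[B].  Integrating out Y_s reduces A and B to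
   multiples of a function of Y_t and z_t whose average over Y_t is zero under the logit
   probabilities. *)

theory Submission
  imports Defs
begin

definition ignores :: "nat \<Rightarrow> ((nat \<Rightarrow> nat) \<Rightarrow> 'a) \<Rightarrow> bool" where
  "ignores i F \<longleftrightarrow> (\<forall>y b. F (y(i := b)) = F y)"

definition markov :: "((nat \<Rightarrow> nat) \<Rightarrow> nat \<Rightarrow> real) \<Rightarrow> bool" where
  "markov p \<longleftrightarrow> (\<forall>u i. i \<noteq> u - 1 \<longrightarrow> ignores i (\<lambda>y. p y u))"

(* p y u is the probability that Y_u = 1 given the history y; step_exp p u F integrates out
   Y_u, so foldr (step_exp p) [Suc m..<Suc n] F is E[F | Y_1, ..., Y_m] for F depending on
   periods up to n. *)

definition step_exp :: "((nat \<Rightarrow> nat) \<Rightarrow> nat \<Rightarrow> real) \<Rightarrow> nat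
    \<Rightarrow> ((nat \<Rightarrow> nat) \<Rightarrow> real) \<Rightarrow> (nat \<Rightarrow> nat) \<Rightarrow> real" where
  "step_exp p u F y = p y u * F (y(u := 1)) + (1 - p y u) * F (y(u := 0))"

lemma step_exp_ignored: "ignores u F \<Longrightarrow> step_exp p u F = F"
  by (simp add: fun_eq_iff step_exp_def ignores_def algebra_simps)

lemma foldr_step_exp_ignored:
  "(\<And>u. u \<in> set us \<Longrightarrow> ignores u F) \<Longrightarrow> foldr (step_exp p) us F = F"
  by (induction us) (simp_all add: step_exp_ignored)

lemma foldr_step_exp_add:
  "foldr (step_exp p) us (\<lambda>y. F y + G y)
     = (\<lambda>y. foldr (step_exp p) us F y + foldr (step_exp p) us G y)"
  by (induction us) (simp_all add: step_exp_def algebra_simps)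

lemma step_exp_mult_ignored:
  "ignores u a \<Longrightarrow> step_exp p u (\<lambda>y. a y * F y) = (\<lambda>y. a y * step_exp p u F y)"
  by (simp add: fun_eq_iff step_exp_def ignores_def algebra_simps)

lemma foldr_step_exp_mult_ignored:
  "(\<And>u. u \<in> set us \<Longrightarrow> ignores u a)
     \<Longrightarrow> foldr (step_exp p) us (\<lambda>y. a y * F y) = (\<lambda>y. a y * foldr (step_exp p) us F y)"
  by (induction us) (simp_all add: step_exp_mult_ignored)

lemma ignores_step_exp:
  "ignores i F \<Longrightarrow> ignores i (\<lambda>y. p y u) \<Longrightarrow> i \<noteq> u \<Longrightarrow> ignores i (step_exp p u F)"
  by (simp add: ignores_def step_exp_def fun_upd_twist[of i])

lemma ignores_foldr_step_exp:
  "ignores i F \<Longrightarrow> (\<And>u. u \<in> set us \<Longrightarrow> i \<noteq> u \<and> ignores i (\<lambda>y. p y u))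
     \<Longrightarrow> ignores i (foldr (step_exp p) us F)"
  by (induction us) (simp_all add: ignores_step_exp)

lemma sum_PiE_insert:
  assumes "x \<notin> S"
  shows "(\<Sum>g\<in>PiE (insert x S) B. f g) = (\<Sum>g\<in>PiE S B. \<Sum>b\<in>B x. f (g(x := b)))"
proof -
  have "(\<Sum>g\<in>PiE (insert x S) B. f g) = (\<Sum>(b, g)\<in>B x \<times> PiE S B. f (g(x := b)))"
    unfolding PiE_insert_eq
    by (subst sum.reindex) (auto intro: inj_combinator[OF assms] simp: case_prod_beta)
  also have "\<dots> = (\<Sum>g\<in>PiE S B. \<Sum>b\<in>B x. f (g(x := b)))"
    by (subst sum.swap) (simp add: sum.cartesian_product)
  finally show ?thesis .
qed

lemma foldr_upt_split:
  "m \<le> k \<Longrightarrow> k \<le> n \<Longrightarrow> foldr f [m..<n] F = foldr f [m..<k] (foldr f [k..<n] F)"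
  using upt_add_eq_append[of m k "n - k"] by simp

lemma sum_paths_eq_foldr_step_exp:
  assumes "markov p"
  shows "(\<Sum>y\<in>PiE {1..n} (\<lambda>_. {0, 1}).
            (\<Prod>u\<in>{1..n}. if y u = 1 then p y u else 1 - p y u) * F y)
       = foldr (step_exp p) [1..<Suc n] F (\<lambda>_. undefined)"
proof (induction n arbitrary: F)
  case 0
  show ?case by simp
next
  case (Suc n)
  let ?q = "\<lambda>y u. if y u = 1 then p y u else 1 - p y u"
  have past: "p (y(Suc n := b)) u = p y u" if "u \<le> n" for y b u
    using assms that by (simp add: markov_def ignores_def)
  have present: "p (y(Suc n := b)) (Suc n) = p y (Suc n)" for y b
    using assms by (simp add: markov_def ignores_def)
  have factor: "(\<Prod>u\<in>insert (Suc n) {1..n}. ?q (y(Suc n := b)) u)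
      = (if b = 1 then p y (Suc n) else 1 - p y (Suc n)) * (\<Prod>u\<in>{1..n}. ?q y u)" for y b
  proof -
    have "(\<Prod>u\<in>{1..n}. ?q (y(Suc n := b)) u) = (\<Prod>u\<in>{1..n}. ?q y u)"
      by (rule prod.cong) (auto simp: past)
    then show ?thesis by (simp add: present)
  qed
  have ins: "{1..Suc n} = insert (Suc n) {1..n}" by auto
  have "(\<Sum>y\<in>PiE {1..Suc n} (\<lambda>_. {0, 1}). (\<Prod>u\<in>{1..Suc n}. ?q y u) * F y)
      = (\<Sum>y\<in>PiE {1..n} (\<lambda>_. {0, 1}). \<Sum>b\<in>{0, 1}.
           (\<Prod>u\<in>insert (Suc n) {1..n}. ?q (y(Suc n := b)) u) * F (y(Suc n := b)))"
    unfolding ins by (rule sum_PiE_insert) simp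
  also have "\<dots> = (\<Sum>y\<in>PiE {1..n} (\<lambda>_. {0, 1}). (\<Prod>u\<in>{1..n}. ?q y u) * step_exp p (Suc n) F y)"
    by (simp only: factor) (simp add: step_exp_def algebra_simps)
  also have "\<dots> = foldr (step_exp p) [1..<Suc n] (step_exp p (Suc n) F) (\<lambda>_. undefined)"
    by (rule Suc.IH)
  also have "\<dots> = foldr (step_exp p) [1..<Suc (Suc n)] F (\<lambda>_. undefined)"
    by simp
  finally show ?case .
qed

lemma sum_paths_moment_eq_0:
  assumes "markov p" "1 \<le> t" "t \<le> r" "r \<le> n"
    and M: "foldr (step_exp p) [t..<Suc r] M = (\<lambda>_. 0)"
    and ignores_M: "\<And>u. r < u \<Longrightarrow> ignores u M"
    and ignores_W: "\<And>u. t \<le> u \<Longrightarrow> ignores u W"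
  shows "(\<Sum>y\<in>PiE {1..n} (\<lambda>_. {0, 1}).
            (\<Prod>u\<in>{1..n}. if y u = 1 then p y u else 1 - p y u) * (W y * M y)) = 0"
proof -
  let ?WM = "\<lambda>y. W y * M y"
  have "foldr (step_exp p) [t..<Suc n] ?WM
      = foldr (step_exp p) [t..<Suc r] (foldr (step_exp p) [Suc r..<Suc n] ?WM)"
    using assms by (intro foldr_upt_split) auto
  also have "foldr (step_exp p) [Suc r..<Suc n] ?WM = ?WM"
    using assms by (intro foldr_step_exp_ignored) (auto simp: ignores_def)
  also have "foldr (step_exp p) [t..<Suc r] ?WM = (\<lambda>y. W y * foldr (step_exp p) [t..<Suc r] M y)"
    using ignores_W by (intro foldr_step_exp_mult_ignored) auto
  finally have after_t: "foldr (step_exp p) [t..<Suc n] ?WM = (\<lambda>_. 0)"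
    by (simp del: upt_Suc add: M)
  have "(\<Sum>y\<in>PiE {1..n} (\<lambda>_. {0, 1}).
            (\<Prod>u\<in>{1..n}. if y u = 1 then p y u else 1 - p y u) * ?WM y)
      = foldr (step_exp p) [1..<Suc n] ?WM (\<lambda>_. undefined)"
    by (rule sum_paths_eq_foldr_step_exp[OF \<open>markov p\<close>])
  also have "\<dots> = foldr (step_exp p) [1..<t] (foldr (step_exp p) [t..<Suc n] ?WM) (\<lambda>_. undefined)"
    using assms by (subst foldr_upt_split[of 1 t]) auto
  also have "\<dots> = 0"
    unfolding after_t by (subst foldr_step_exp_ignored) (auto simp: ignores_def)
  finally show ?thesis .
qed

lemma foldr_step_exp_two_periods:
  assumes "t < s" "step_exp p s F = H" "\<And>u. t < u \<Longrightarrow> ignores u H"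
  shows "foldr (step_exp p) [t..<Suc s] F = step_exp p t H"
proof -
  have "foldr (step_exp p) [Suc t..<s] H = H"
    using assms by (intro foldr_step_exp_ignored) auto
  with assms show ?thesis
    by (simp add: upt_conv_Cons)
qed

lemma foldr_step_exp_three_periods:
  assumes "markov p" "t < s" "s < r"
    and step_r: "step_exp p r M = (\<lambda>y. A y * (1 - p y r) + B y)"
    and A_support: "\<And>y. y s \<noteq> c \<Longrightarrow> A y = 0"
    and ignores_AB: "\<And>u. s < u \<Longrightarrow> ignores u A \<and> ignores u B"
    and A: "foldr (step_exp p) [t..<Suc s] A = (\<lambda>_. 0)"
    and B: "foldr (step_exp p) [t..<Suc s] B = (\<lambda>_. 0)"
  shows "foldr (step_exp p) [t..<Suc r] M = (\<lambda>_. 0)"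
proof -
  define G where "G = foldr (step_exp p) [Suc s..<r] (\<lambda>y. 1 - p y r)"
  \<comment> \<open>A vanishes off {Y_s = c}, so G may be read at Y_s = c, which frees it of periods up to s.\<close>
  have ignores_G: "ignores u G" if "u < s" for u
    unfolding G_def using assms that
    by (intro ignores_foldr_step_exp) (auto simp: markov_def ignores_def)
  have ignores_G_s: "ignores u (\<lambda>y. G (y(s := c)))" if "u \<le> s" for u
    using ignores_G[of u] that by (cases "u = s") (auto simp: ignores_def fun_upd_twist[of u])
  have "foldr (step_exp p) [Suc s..<r] (\<lambda>y. A y * (1 - p y r)) = (\<lambda>y. A y * G y)"
    unfolding G_def using ignores_AB by (intro foldr_step_exp_mult_ignored) auto
  moreover have "foldr (step_exp p) [Suc s..<r] B = B"
    using ignores_AB by (intro foldr_step_exp_ignored) auto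
  ultimately have "foldr (step_exp p) [Suc s..<r] (step_exp p r M) = (\<lambda>y. A y * G y + B y)"
    unfolding step_r foldr_step_exp_add by simp
  also have "\<dots> = (\<lambda>y. G (y(s := c)) * A y + B y)"
  proof
    fix y
    show "A y * G y + B y = G (y(s := c)) * A y + B y"
      using A_support[of y] by (cases "y s = c") (auto simp: fun_upd_idem)
  qed
  finally have after_s: "foldr (step_exp p) [Suc s..<Suc r] M = (\<lambda>y. G (y(s := c)) * A y + B y)"
    using \<open>s < r\<close> by simp
  have "foldr (step_exp p) [t..<Suc r] M = foldr (step_exp p) [t..<Suc s] (foldr (step_exp p) [Suc s..<Suc r] M)"
    using assms by (intro foldr_upt_split) auto
  also have "\<dots> = foldr (step_exp p) [t..<Suc s] (\<lambda>y. G (y(s := c)) * A y + B y)"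
    unfolding after_s ..
  also have "\<dots> = (\<lambda>y. G (y(s := c)) * foldr (step_exp p) [t..<Suc s] A y
      + foldr (step_exp p) [t..<Suc s] B y)"
    unfolding foldr_step_exp_add using ignores_G_s by (subst foldr_step_exp_mult_ignored) auto
  also have "\<dots> = (\<lambda>_. 0)"
    using A B by simp
  finally show ?thesis .
qed

context
  fixes K y0 :: nat and x :: "nat \<Rightarrow> nat \<Rightarrow> real" and beta :: "nat \<Rightarrow> real"
    and gamma alpha :: real
begin

definition logit_prob :: "(nat \<Rightarrow> nat) \<Rightarrow> nat \<Rightarrow> real" where
  "logit_prob y u = logistic (zidx K y0 y x beta gamma u + alpha)"

definition odds :: "(nat \<Rightarrow> nat) \<Rightarrow> nat \<Rightarrow> real" where
  "odds y u = exp (zidx K y0 y x beta gamma u + alpha)"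

lemma odds_pos [simp]: "0 < odds y u" and odds_nonzero [simp]: "odds y u \<noteq> 0"
  and one_plus_odds_nonzero [simp]: "1 + odds y u \<noteq> 0"
  using add_pos_pos[OF zero_less_one, of "odds y u"] by (simp_all add: odds_def)

lemma logit_prob_eq_odds: "logit_prob y u = odds y u / (1 + odds y u)"
  by (simp add: logit_prob_def odds_def logistic_def)

lemma exp_zidx_diff: "exp (zidx K y0 y x beta gamma u - zidx K y0 y x beta gamma v) = odds y u / odds y v"
  by (simp add: odds_def exp_diff [symmetric])

lemma zidx_fun_upd: "i \<noteq> u - 1 \<Longrightarrow> zidx K y0 (y(i := b)) x beta gamma u = zidx K y0 y x beta gamma u"
  by (simp add: zidx_def lagy_def)

lemma odds_fun_upd [simp]: "i \<noteq> u - 1 \<Longrightarrow> odds (y(i := b)) u = odds y u"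
  by (simp add: odds_def zidx_fun_upd)

lemma markov_logit_prob: "markov logit_prob"
  by (simp add: markov_def ignores_def logit_prob_def zidx_fun_upd)

lemma step_exp_logit_prob:
  "step_exp logit_prob u F y = (odds y u * F (y(u := 1)) + F (y(u := 0))) / (1 + odds y u)"
proof -
  have "1 - logit_prob y u = 1 / (1 + odds y u)"
    by (simp add: logit_prob_eq_odds field_simps)
  then show ?thesis
    by (simp add: step_exp_def logit_prob_eq_odds add_divide_distrib)
qed

lemma cprob_eq_prod_logit_prob:
  "cprob K T y0 x beta gamma alpha y
     = (\<Prod>u\<in>{1..T}. if y u = 1 then logit_prob y u else 1 - logit_prob y u)"
  unfolding cprob_def logit_prob_def Let_def ..

lemma sum_cprob_moment_eq_0:
  assumes "1 \<le> t" "t \<le> r" "r \<le> T"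
    and "foldr (step_exp logit_prob) [t..<Suc r] M = (\<lambda>_. 0)"
    and "\<And>u. r < u \<Longrightarrow> ignores u M" and "\<And>u. t \<le> u \<Longrightarrow> ignores u W"
  shows "(\<Sum>y\<in>PiE {1..T} (\<lambda>_. {0, 1}). cprob K T y0 x beta gamma alpha y * (W y * M y)) = 0"
  unfolding cprob_eq_prod_logit_prob by (rule sum_paths_moment_eq_0[OF markov_logit_prob assms])

lemma ignores_m_a:
  assumes "t < s" "s < r" "r < u"
  shows "ignores u (\<lambda>y. m_a K t s r y0 y x beta gamma)"
  unfolding ignores_def
proof (intro allI)
  fix y b
  have "u \<notin> {t, s, r, t - 1, s - 1, r - 1}"
    using assms by auto
  then show "m_a K t s r y0 (y(u := b)) x beta gamma = m_a K t s r y0 y x beta gamma"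
    unfolding m_a_def Let_def by (simp add: zidx_fun_upd)
qed

lemma ignores_m_b:
  assumes "t < s" "s < r" "r < u"
  shows "ignores u (\<lambda>y. m_b K t s r y0 y x beta gamma)"
  unfolding ignores_def
proof (intro allI)
  fix y b
  have "u \<notin> {t, s, r, t - 1, s - 1, r - 1}"
    using assms by auto
  then show "m_b K t s r y0 (y(u := b)) x beta gamma = m_b K t s r y0 y x beta gamma"
    unfolding m_b_def Let_def by (simp add: zidx_fun_upd)
qed

lemma foldr_step_exp_m_a:
  assumes "1 \<le> t" "t < s" "s < r"
  shows "foldr (step_exp logit_prob) [t..<Suc r] (\<lambda>y. m_a K t s r y0 y x beta gamma) = (\<lambda>_. 0)"
proof -
  define H where "H y = of_bool (y t = 0) * odds y t - of_bool (y t = 1)" for y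
  define A where "A y = of_bool (y s = 1) * (1 + odds y s) / odds y s * H y" for y
  define B where "B y = of_bool (y t = 1) * (of_bool (y s = 1) / odds y s - of_bool (y s = 0))" for y
  have step_r: "step_exp logit_prob r (\<lambda>y. m_a K t s r y0 y x beta gamma)
      = (\<lambda>y. A y * (1 - logit_prob y r) + B y)"
  proof
    fix y
    show "step_exp logit_prob r (\<lambda>y. m_a K t s r y0 y x beta gamma) y = A y * (1 - logit_prob y r) + B y"
      using assms
      by (cases "y t = 0"; cases "y t = 1"; cases "y s = 0"; cases "y s = 1")
        (simp_all add: step_exp_logit_prob logit_prob_eq_odds m_a_def A_def B_def H_def Let_def
          zidx_fun_upd exp_zidx_diff field_simps
          dual_order.strict_implies_not_eq add_pos_pos mult_pos_pos)
  qed
  have A_vanishes: "foldr (step_exp logit_prob) [t..<Suc s] A = (\<lambda>_. 0)"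
  proof -
    have "step_exp logit_prob s A = H"
      using assms by (simp add: fun_eq_iff step_exp_logit_prob A_def H_def)
    moreover have "step_exp logit_prob t H = (\<lambda>_. 0)"
      using assms by (simp add: fun_eq_iff step_exp_logit_prob H_def)
    moreover have "\<And>u. t < u \<Longrightarrow> ignores u H"
      by (simp add: ignores_def H_def)
    ultimately show ?thesis
      using assms foldr_step_exp_two_periods[of t s logit_prob A H] by simp
  qed
  have B_vanishes: "foldr (step_exp logit_prob) [t..<Suc s] B = (\<lambda>_. 0)"
  proof -
    have "step_exp logit_prob s B = (\<lambda>_. 0)"
      using assms by (simp add: fun_eq_iff step_exp_logit_prob B_def)
    then have "foldr (step_exp logit_prob) [t..<Suc s] B = step_exp logit_prob t (\<lambda>_. 0)"
      using assms by (intro foldr_step_exp_two_periods) (auto simp: ignores_def)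
    also have "\<dots> = (\<lambda>_. 0)"
      by (rule step_exp_ignored) (simp add: ignores_def)
    finally show ?thesis .
  qed
  show ?thesis
    by (rule foldr_step_exp_three_periods[OF markov_logit_prob _ _ step_r _ _ A_vanishes B_vanishes,
          where c = 1]) (use assms in \<open>auto simp: ignores_def A_def B_def H_def\<close>)
qed

lemma foldr_step_exp_m_b:
  assumes "1 \<le> t" "t < s" "s < r"
  shows "foldr (step_exp logit_prob) [t..<Suc r] (\<lambda>y. m_b K t s r y0 y x beta gamma) = (\<lambda>_. 0)"
proof -
  define H where "H y = of_bool (y t = 0) - of_bool (y t = 1) / odds y t" for y
  define A where "A y = of_bool (y s = 0) * (1 + odds y s) * H y" for y
  define B where "B y = of_bool (y s = 0) * (of_bool (y t = 1) * (1 + odds y s) / odds y t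
      - of_bool (y t = 0)) - of_bool (y t = 0) * of_bool (y s = 1)" for y
  have step_r: "step_exp logit_prob r (\<lambda>y. m_b K t s r y0 y x beta gamma)
      = (\<lambda>y. A y * (1 - logit_prob y r) + B y)"
  proof
    fix y
    show "step_exp logit_prob r (\<lambda>y. m_b K t s r y0 y x beta gamma) y = A y * (1 - logit_prob y r) + B y"
      using assms
      by (cases "y t = 0"; cases "y t = 1"; cases "y s = 0"; cases "y s = 1")
        (simp_all add: step_exp_logit_prob logit_prob_eq_odds m_b_def A_def B_def H_def Let_def
          zidx_fun_upd exp_zidx_diff field_simps
          dual_order.strict_implies_not_eq add_pos_pos mult_pos_pos)
  qed
  have A_vanishes: "foldr (step_exp logit_prob) [t..<Suc s] A = (\<lambda>_. 0)"
  proof -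
    have "step_exp logit_prob s A = H"
      using assms by (simp add: fun_eq_iff step_exp_logit_prob A_def H_def)
    moreover have "step_exp logit_prob t H = (\<lambda>_. 0)"
      using assms by (simp add: fun_eq_iff step_exp_logit_prob H_def)
    moreover have "\<And>u. t < u \<Longrightarrow> ignores u H"
      by (simp add: ignores_def H_def)
    ultimately show ?thesis
      using assms foldr_step_exp_two_periods[of t s logit_prob A H] by simp
  qed
  have B_vanishes: "foldr (step_exp logit_prob) [t..<Suc s] B = (\<lambda>_. 0)"
  proof -
    have "step_exp logit_prob s B = (\<lambda>y. - H y)"
      using assms by (simp add: fun_eq_iff step_exp_logit_prob B_def H_def field_simps
        dual_order.strict_implies_not_eq add_pos_pos mult_pos_pos)
    moreover have "step_exp logit_prob t (\<lambda>y. - H y) = (\<lambda>_. 0)"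
      using assms by (simp add: fun_eq_iff step_exp_logit_prob H_def)
    moreover have "\<And>u. t < u \<Longrightarrow> ignores u (\<lambda>y. - H y)"
      by (simp add: ignores_def H_def)
    ultimately show ?thesis
      using assms foldr_step_exp_two_periods[of t s logit_prob B "\<lambda>y. - H y"] by simp
  qed
  show ?thesis
    by (rule foldr_step_exp_three_periods[OF markov_logit_prob _ _ step_r _ _ A_vanishes B_vanishes,
          where c = 0]) (use assms in \<open>auto simp: ignores_def A_def B_def H_def\<close>)
qed

end

theorem proposition1:
  fixes K T t s r y0 :: nat
    and x :: "nat \<Rightarrow> nat \<Rightarrow> real" and beta0 :: "nat \<Rightarrow> real"
    and gamma0 alpha :: real
    and w :: "(nat \<Rightarrow> nat) \<Rightarrow> real"
  assumes "T \<ge> 3" and "1 \<le> t" and "t < s" and "s < r" and "r \<le> T"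
    and "y0 \<in> {0, 1}"
  shows "(\<Sum>y\<in>PiE {1..T} (\<lambda>_. {0, 1}).
            cprob K T y0 x beta0 gamma0 alpha y *
            (w (restrict y {1..t - 1}) * m_a K t s r y0 y x beta0 gamma0)) = 0
       \<and> (\<Sum>y\<in>PiE {1..T} (\<lambda>_. {0, 1}).
            cprob K T y0 x beta0 gamma0 alpha y *
            (w (restrict y {1..t - 1}) * m_b K t s r y0 y x beta0 gamma0)) = 0"
proof -
  have ignores_w: "ignores u (\<lambda>y. w (restrict y {1..t - 1}))" if "t \<le> u" for u
    using that by (auto simp: ignores_def intro!: arg_cong[where f = w] restrict_ext)
  show ?thesis
    using assms
    by (intro conjI
        sum_cprob_moment_eq_0[OF _ _ _ foldr_step_exp_m_a ignores_m_a ignores_w]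
        sum_cprob_moment_eq_0[OF _ _ _ foldr_step_exp_m_b ignores_m_b ignores_w]) auto
qed

end
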